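(* Let $(\Omega,\mathcal{F})$ be a measurable space and $\theta:\Omega\to\Omega$ any $\mathcal{F}/\mathcal{F}$-measurable map. Then there exists a subadditive $\theta$-invariant capacity on $\mathcal{F}$ and there exists a superadditive $\theta$-invariant capacity on $\mathcal{F}$. In particular, there exists a $\theta$-invariant capacity on $\mathcal{F}$.
   Context: A capacity is $\mu:\mathcal{F}\to[0,1]$ with $\mu(\emptyset)=0$, $\mu(\Omega)=1$ and $\mu(A)\le\mu(B)$ for $A\subseteq B$. It is subadditive if $\mu(A\cup B)\le\mu(A)+\mu(B)$ for disjoint $A,B$, and superadditive if $\mu(A\cup B)\ge\mu(A)+\mu(B)$ for disjoint $A,B$. It is $\theta$-invariant if $\mu(\theta^{-1}A)=\mu(A)$ for all $A\in\mathcal{F}$. *)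

theory Defs
  imports "HOL-Analysis.Analysis"
begin

definition capacity :: "'a measure \<Rightarrow> ('a set \<Rightarrow> real) \<Rightarrow> bool" where
  "capacity M \<mu> \<longleftrightarrow>
     (\<forall>A\<in>sets M. 0 \<le> \<mu> A \<and> \<mu> A \<le> 1) \<and>
     \<mu> {} = 0 \<and> \<mu> (space M) = 1 \<and>
     (\<forall>A\<in>sets M. \<forall>B\<in>sets M. A \<subseteq> B \<longrightarrow> \<mu> A \<le> \<mu> B)"

definition subadditive_cap :: "'a measure \<Rightarrow> ('a set \<Rightarrow> real) \<Rightarrow> bool" where
  "subadditive_cap M \<mu> \<longleftrightarrow>
     (\<forall>A\<in>sets M. \<forall>B\<in>sets M. A \<inter> B = {} \<longrightarrow> \<mu> (A \<union> B) \<le> \<mu> A + \<mu> B)"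

definition superadditive_cap :: "'a measure \<Rightarrow> ('a set \<Rightarrow> real) \<Rightarrow> bool" where
  "superadditive_cap M \<mu> \<longleftrightarrow>
     (\<forall>A\<in>sets M. \<forall>B\<in>sets M. A \<inter> B = {} \<longrightarrow> \<mu> (A \<union> B) \<ge> \<mu> A + \<mu> B)"

definition invariant_cap :: "'a measure \<Rightarrow> ('a \<Rightarrow> 'a) \<Rightarrow> ('a set \<Rightarrow> real) \<Rightarrow> bool" where
  "invariant_cap M \<theta> \<mu> \<longleftrightarrow> (\<forall>A\<in>sets M. \<mu> (\<theta> -` A \<inter> space M) = \<mu> A)"

end

theory Submission
  imports Defs
begin

text \<open>Pick a point \<open>x\<close> and follow its orbit \<open>\<theta>\<^sup>n x\<close>. The set function that is \<open>1\<close> on the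
  sets the orbit visits infinitely often (and \<open>0\<close> elsewhere) is a subadditive capacity, the one
  that is \<open>1\<close> on the sets the orbit eventually stays in is a superadditive capacity, and both are
  \<open>\<theta>\<close>-invariant because shifting the orbit by one step changes neither property. More generally,
  any proper filter that is invariant under \<open>\<theta>\<close> and lives on the space gives two such
  capacities.\<close>

definition eventually_cap :: "'a filter \<Rightarrow> 'a set \<Rightarrow> real" where
  "eventually_cap F A = (if \<forall>\<^sub>F x in F. x \<in> A then 1 else 0)"

definition frequently_cap :: "'a filter \<Rightarrow> 'a set \<Rightarrow> real" where
  "frequently_cap F A = (if \<exists>\<^sub>F x in F. x \<in> A then 1 else 0)"

definition orbit_filter :: "('a \<Rightarrow> 'a) \<Rightarrow> 'a \<Rightarrow> 'a filter" where
  "orbit_filter \<theta> x = filtermap (\<lambda>n. (\<theta> ^^ n) x) sequentially"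

lemma capacity_eventually_cap:
  assumes "F \<noteq> bot" and "\<forall>\<^sub>F x in F. x \<in> space M"
  shows "capacity M (eventually_cap F)"
proof -
  have "\<forall>\<^sub>F x in F. x \<in> B" if "A \<subseteq> B" "\<forall>\<^sub>F x in F. x \<in> A" for A B
    using that(2) by (rule eventually_mono) (use that(1) in blast)
  then show ?thesis
    using assms unfolding capacity_def eventually_cap_def by auto
qed

lemma capacity_frequently_cap:
  assumes "F \<noteq> bot" and "\<forall>\<^sub>F x in F. x \<in> space M"
  shows "capacity M (frequently_cap F)"
proof -
  have "\<exists>\<^sub>F x in F. x \<in> B" if "A \<subseteq> B" "\<exists>\<^sub>F x in F. x \<in> A" for A B
    using that(2) by (rule frequently_elim1) (use that(1) in blast)
  then show ?thesis
    using assms eventually_frequently[OF assms]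
    unfolding capacity_def frequently_cap_def by auto
qed

lemma superadditive_eventually_cap:
  assumes "F \<noteq> bot"
  shows "superadditive_cap M (eventually_cap F)"
proof -
  have disjoint: "\<not> ((\<forall>\<^sub>F x in F. x \<in> A) \<and> (\<forall>\<^sub>F x in F. x \<in> B))"
    if "A \<inter> B = {}" for A B :: "'a set"
  proof
    assume "(\<forall>\<^sub>F x in F. x \<in> A) \<and> (\<forall>\<^sub>F x in F. x \<in> B)"
    then have "\<forall>\<^sub>F x in F. x \<in> A \<and> x \<in> B"
      by (simp add: eventually_conj_iff)
    then have "\<forall>\<^sub>F x in F. False"
      by (rule eventually_mono) (use that in blast)
    with assms show False by simp
  qed
  have union: "\<forall>\<^sub>F x in F. x \<in> A \<union> B" if "(\<forall>\<^sub>F x in F. x \<in> A) \<or> (\<forall>\<^sub>F x in F. x \<in> B)"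
    for A B :: "'a set"
    using that by (auto elim: eventually_mono)
  show ?thesis
    unfolding superadditive_cap_def eventually_cap_def
    using disjoint union by fastforce
qed

lemma subadditive_frequently_cap: "subadditive_cap M (frequently_cap F)"
  unfolding subadditive_cap_def frequently_cap_def by (auto simp: frequently_disj_iff)

lemma invariant_eventually_cap:
  assumes "filtermap \<theta> F = F" and "\<forall>\<^sub>F x in F. x \<in> space M"
  shows "invariant_cap M \<theta> (eventually_cap F)"
proof -
  have "(\<forall>\<^sub>F x in F. x \<in> \<theta> -` A \<inter> space M) \<longleftrightarrow> (\<forall>\<^sub>F x in F. \<theta> x \<in> A)" for A
    using assms(2) by (rule eventually_cong) simp
  also have "\<dots> A \<longleftrightarrow> (\<forall>\<^sub>F x in F. x \<in> A)" for A
    by (subst (2) assms(1)[symmetric]) (simp add: eventually_filtermap)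
  finally show ?thesis
    unfolding invariant_cap_def eventually_cap_def by simp
qed

lemma invariant_frequently_cap:
  assumes "filtermap \<theta> F = F" and "\<forall>\<^sub>F x in F. x \<in> space M"
  shows "invariant_cap M \<theta> (frequently_cap F)"
proof -
  have "(\<exists>\<^sub>F x in F. x \<in> \<theta> -` A \<inter> space M) \<longleftrightarrow> (\<exists>\<^sub>F x in F. \<theta> x \<in> A)" for A
    using assms(2) by (rule frequently_cong) simp
  also have "\<dots> A \<longleftrightarrow> (\<exists>\<^sub>F x in F. x \<in> A)" for A
    by (subst (2) assms(1)[symmetric]) (simp add: frequently_filtermap)
  finally show ?thesis
    unfolding invariant_cap_def frequently_cap_def by simp
qed

lemma orbit_filter_nontrivial: "orbit_filter \<theta> x \<noteq> bot"
  by (simp add: orbit_filter_def filtermap_bot_iff)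

lemma filtermap_orbit_filter: "filtermap \<theta> (orbit_filter \<theta> x) = orbit_filter \<theta> x"
proof (rule filter_eqI)
  fix P
  have "eventually P (filtermap \<theta> (orbit_filter \<theta> x))
      \<longleftrightarrow> (\<forall>\<^sub>F n in sequentially. P ((\<theta> ^^ Suc n) x))"
    by (simp add: orbit_filter_def eventually_filtermap)
  also have "\<dots> \<longleftrightarrow> (\<forall>\<^sub>F n in sequentially. P ((\<theta> ^^ n) x))"
    by (rule eventually_sequentially_Suc)
  also have "\<dots> \<longleftrightarrow> eventually P (orbit_filter \<theta> x)"
    by (simp add: orbit_filter_def eventually_filtermap)
  finally show "eventually P (filtermap \<theta> (orbit_filter \<theta> x)) \<longleftrightarrow> eventually P (orbit_filter \<theta> x)" .
qed

lemma eventually_orbit_filter_in_space: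
  assumes "\<theta> \<in> measurable M M" and "x \<in> space M"
  shows "\<forall>\<^sub>F y in orbit_filter \<theta> x. y \<in> space M"
proof -
  have "(\<theta> ^^ n) x \<in> space M" for n
    by (induction n) (use assms in \<open>auto simp: measurable_space\<close>)
  then show ?thesis
    by (simp add: orbit_filter_def eventually_filtermap)
qed

theorem proposition4:
  fixes M :: "'a measure" and \<theta> :: "'a \<Rightarrow> 'a"
  assumes "space M \<noteq> {}" and "\<theta> \<in> measurable M M"
  shows "(\<exists>\<mu>. capacity M \<mu> \<and> subadditive_cap M \<mu> \<and> invariant_cap M \<theta> \<mu>)
       \<and> (\<exists>\<mu>. capacity M \<mu> \<and> superadditive_cap M \<mu> \<and> invariant_cap M \<theta> \<mu>)
       \<and> (\<exists>\<mu>. capacity M \<mu> \<and> invariant_cap M \<theta> \<mu>)"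
proof -
  obtain x where "x \<in> space M"
    using assms(1) by blast
  define F where "F = orbit_filter \<theta> x"
  have proper: "F \<noteq> bot"
    by (simp add: F_def orbit_filter_nontrivial)
  have invariant: "filtermap \<theta> F = F"
    by (simp add: F_def filtermap_orbit_filter)
  have in_space: "\<forall>\<^sub>F y in F. y \<in> space M"
    unfolding F_def using assms(2) \<open>x \<in> space M\<close> by (rule eventually_orbit_filter_in_space)
  have "capacity M (frequently_cap F) \<and> subadditive_cap M (frequently_cap F)
      \<and> invariant_cap M \<theta> (frequently_cap F)"
    using capacity_frequently_cap[OF proper in_space] subadditive_frequently_cap
      invariant_frequently_cap[OF invariant in_space] by blast
  moreover have "capacity M (eventually_cap F) \<and> superadditive_cap M (eventually_cap F)
      \<and> invariant_cap M \<theta> (eventually_cap F)"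
    using capacity_eventually_cap[OF proper in_space] superadditive_eventually_cap[OF proper]
      invariant_eventually_cap[OF invariant in_space] by blast
  ultimately show ?thesis
    by blast
qed

end
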